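(* Let $T>0$, $0<\eta<T$ and $0<\alpha<\frac{1}{\eta}$. If $y\in C([0,T],[0,\infty))$, then the unique solution $u$ of the problem \[ u''(t)+y(t)=0,\quad t\in(0,T),\qquad u'(0)=0,\quad u(T)=\alpha\int_0^{\eta}u(s)\,ds \] satisfies \[ \min_{t\in[0,T]}u(t)\ge \gamma\|u\|,\qquad\text{where } \gamma=\frac{\alpha\eta(T-\eta)}{T-\alpha\eta^2},\quad \|u\|=\max_{t\in[0,T]}|u(t)|. \] *)

theory Defs
  imports "HOL-Analysis.Analysis"
begin

end

theory Submission
  imports Defs
begin

text \<open>
  Since \<open>u'' = -y \<le> 0\<close> and \<open>u'(0) = 0\<close>, the derivative \<open>u'\<close> is nonpositive and
  nonincreasing, so \<open>u\<close> is nonincreasing and concave: \<open>min u = u(T)\<close>, and comparing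
  \<open>u(\<eta>)\<close> with the chord from \<open>(0, u(0))\<close> to \<open>(T, u(T))\<close> gives
  \<open>(T - \<eta>) u(0) + \<eta> u(T) \<le> T u(\<eta>)\<close>. Monotonicity bounds the integral in the boundary
  condition by \<open>u(T) \<ge> \<alpha> \<eta> u(\<eta>)\<close>; eliminating \<open>u(\<eta>)\<close> yields
  \<open>(T - \<alpha> \<eta>\<^sup>2) u(T) \<ge> \<alpha> \<eta> (T - \<eta>) u(0)\<close>, which together with \<open>u(T) \<le> u(0)\<close> forces
  \<open>u(T) \<ge> 0\<close>. Hence \<open>\<parallel>u\<parallel> = u(0)\<close> and the bound is \<open>u(T) \<ge> \<gamma> u(0)\<close>.
\<close>

lemma antimono_on_Icc_if_deriv_nonpos:
  fixes f f' :: "real \<Rightarrow> real"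
  assumes "continuous_on {a..b} f"
    and "\<And>x. x \<in> {a<..<b} \<Longrightarrow> (f has_real_derivative f' x) (at x)"
    and "\<And>x. x \<in> {a<..<b} \<Longrightarrow> f' x \<le> 0"
  shows "antimono_on {a..b} f"
proof (rule monotone_onI)
  fix x z assume xz: "x \<in> {a..b}" "z \<in> {a..b}" "x \<le> z"
  show "f z \<le> f x"
  proof (rule DERIV_nonpos_imp_decreasing_open[OF \<open>x \<le> z\<close>])
    show "continuous_on {x..z} f"
      using assms(1) by (rule continuous_on_subset) (use xz in auto)
    show "\<exists>y. (f has_real_derivative y) (at t) \<and> y \<le> 0" if "x < t" "t < z" for t
      using assms(2,3) that xz by force
  qed
qed

lemma concave_three_point_if_deriv_antimono:
  fixes f f' :: "real \<Rightarrow> real"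
  assumes "a < c" "c < b"
    and der: "\<And>x. x \<in> {a..b} \<Longrightarrow> (f has_real_derivative f' x) (at x within {a..b})"
    and anti: "antimono_on {a..b} f'"
  shows "(b - c) * f a + (c - a) * f b \<le> (b - a) * f c"
proof -
  have mvt: "\<exists>z\<in>{s<..<t}. f t - f s = f' z * (t - s)"
    if "a \<le> s" "s < t" "t \<le> b" for s t
  proof (rule mvt_simple[OF \<open>s < t\<close>])
    fix x assume "s \<le> x" "x \<le> t"
    with that have "(f has_real_derivative f' x) (at x within {s..t})"
      by (intro DERIV_subset[OF der]) auto
    then show "(f has_derivative (*) (f' x)) (at x within {s..t})"
      by (simp add: has_field_derivative_def)
  qed
  obtain z1 where z1: "z1 \<in> {a<..<c}" "f c - f a = f' z1 * (c - a)"
    using mvt[of a c] assms(1,2) by auto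
  obtain z2 where z2: "z2 \<in> {c<..<b}" "f b - f c = f' z2 * (b - c)"
    using mvt[of c b] assms(1,2) by auto
  have "f' z2 \<le> f' z1"
    using monotone_onD[OF anti, of z1 z2] z1(1) z2(1) by auto
  then have "(c - a) * (b - c) * f' z2 \<le> (c - a) * (b - c) * f' z1"
    using assms(1,2) by (intro mult_left_mono) auto
  moreover have "(b - c) * (f c - f a) = (c - a) * (b - c) * f' z1"
    using z1(2) by simp
  moreover have "(c - a) * (f b - f c) = (c - a) * (b - c) * f' z2"
    using z2(2) by simp
  ultimately show ?thesis
    by (simp add: algebra_simps)
qed

lemma integral_ge_of_antimono_on:
  fixes f :: "real \<Rightarrow> real"
  assumes "a \<le> b" "continuous_on {a..b} f" "antimono_on {a..b} f"
  shows "(b - a) * f b \<le> integral {a..b} f"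
proof -
  have "integral {a..b} (\<lambda>_. f b) \<le> integral {a..b} f"
    using assms by (intro integral_le integrable_continuous_interval)
      (auto intro: monotone_onD[OF assms(3)])
  with assms(1) show ?thesis
    by (simp add: mult.commute)
qed

lemma cINF_antimono_on_Icc:
  fixes f :: "real \<Rightarrow> real"
  assumes "a \<le> b" "antimono_on {a..b} f"
  shows "(INF t\<in>{a..b}. f t) = f b"
  using assms by (intro cInf_eq_minimum) (auto intro: monotone_onD[OF assms(2)])

lemma cSUP_abs_antimono_on_Icc:
  fixes f :: "real \<Rightarrow> real"
  assumes "a \<le> b" "antimono_on {a..b} f" "0 \<le> f b"
  shows "(SUP t\<in>{a..b}. \<bar>f t\<bar>) = f a"
proof (rule cSup_eq_maximum)
  have bounds: "f b \<le> f t" "f t \<le> f a" if "t \<in> {a..b}" for t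
    using that monotone_onD[OF assms(2)] by auto
  show "f a \<in> (\<lambda>t. \<bar>f t\<bar>) ` {a..b}"
    using assms bounds[of a] by force
  show "x \<le> f a" if "x \<in> (\<lambda>t. \<bar>f t\<bar>) ` {a..b}" for x
    using that assms(3) bounds by fastforce
qed

lemma three_point_estimate:
  fixes T \<eta> \<alpha> u\<^sub>0 u\<^sub>\<eta> u\<^sub>T :: real
  assumes "0 < \<eta>" "\<eta> < T" "0 < \<alpha>" "\<alpha> * \<eta> < 1" "u\<^sub>T \<le> u\<^sub>0"
    and concave: "(T - \<eta>) * u\<^sub>0 + \<eta> * u\<^sub>T \<le> T * u\<^sub>\<eta>"
    and boundary: "\<alpha> * \<eta> * u\<^sub>\<eta> \<le> u\<^sub>T"
  shows "\<alpha> * \<eta> * (T - \<eta>) / (T - \<alpha> * \<eta>^2) * u\<^sub>0 \<le> u\<^sub>T" and "0 \<le> u\<^sub>T"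
proof -
  have "\<alpha> * \<eta> * ((T - \<eta>) * u\<^sub>0 + \<eta> * u\<^sub>T) \<le> \<alpha> * \<eta> * (T * u\<^sub>\<eta>)"
    using concave assms(1,3) by (intro mult_left_mono) auto
  moreover have "T * (\<alpha> * \<eta> * u\<^sub>\<eta>) \<le> T * u\<^sub>T"
    using boundary assms(1,2) by (intro mult_left_mono) auto
  ultimately have key: "\<alpha> * \<eta> * (T - \<eta>) * u\<^sub>0 \<le> (T - \<alpha> * \<eta>^2) * u\<^sub>T"
    by (simp add: algebra_simps power2_eq_square)
  have "\<alpha> * \<eta>^2 = (\<alpha> * \<eta>) * \<eta>"
    by (simp add: power2_eq_square)
  also have "\<dots> < \<eta>"
    using assms(1,4) mult_strict_right_mono[of "\<alpha> * \<eta>" 1 \<eta>] by simp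
  also have "\<dots> < T"
    by (fact assms(2))
  finally have "0 < T - \<alpha> * \<eta>^2"
    by simp
  with key show "\<alpha> * \<eta> * (T - \<eta>) / (T - \<alpha> * \<eta>^2) * u\<^sub>0 \<le> u\<^sub>T"
    by (simp add: pos_divide_le_eq mult.commute)
  have "\<alpha> * \<eta> * (T - \<eta>) * u\<^sub>T \<le> \<alpha> * \<eta> * (T - \<eta>) * u\<^sub>0"
    using assms(1-3,5) by (intro mult_left_mono) auto
  with key have "0 \<le> (T * (1 - \<alpha> * \<eta>)) * u\<^sub>T"
    by (simp add: algebra_simps power2_eq_square)
  moreover have "0 < T * (1 - \<alpha> * \<eta>)"
    using assms(1,2,4) by simp
  ultimately show "0 \<le> u\<^sub>T"
    by (simp add: zero_le_mult_iff)
qed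

theorem lemma2p4:
  fixes T \<eta> \<alpha> :: real and y u u' :: "real \<Rightarrow> real"
  assumes "T > 0" and "0 < \<eta>" and "\<eta> < T"
    and "0 < \<alpha>" and "\<alpha> < 1 / \<eta>"
    and "continuous_on {0..T} y" and "\<forall>t\<in>{0..T}. y t \<ge> 0"
    and "\<forall>t\<in>{0..T}. (u has_real_derivative u' t) (at t within {0..T})"
    and "continuous_on {0..T} u'"
    and "\<forall>t\<in>{0<..<T}. (u' has_real_derivative (- y t)) (at t)"
    and "u' 0 = 0"
    and "u T = \<alpha> * integral {0..\<eta>} u"
  shows "(INF t\<in>{0..T}. u t) \<ge>
           (\<alpha> * \<eta> * (T - \<eta>) / (T - \<alpha> * \<eta>^2)) * (SUP t\<in>{0..T}. \<bar>u t\<bar>)"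
proof -
  have u'_anti: "antimono_on {0..T} u'"
    using assms(7,9,10) by (intro antimono_on_Icc_if_deriv_nonpos) auto
  have u'_nonpos: "u' t \<le> 0" if "t \<in> {0..T}" for t
    using monotone_onD[OF u'_anti, of 0 t] that assms(1,11) by auto
  have cont_u: "continuous_on {0..T} u"
    using assms(8) by (intro DERIV_continuous_on) auto
  have u_anti: "antimono_on {0..T} u"
  proof (rule antimono_on_Icc_if_deriv_nonpos[OF cont_u])
    show "(u has_real_derivative u' t) (at t)" if "t \<in> {0<..<T}" for t
      using assms(8) at_within_Icc_at[of 0 t T] that
      by (metis greaterThanLessThan_iff atLeastAtMost_iff less_eq_real_def)
  qed (use u'_nonpos in auto)
  have "(T - \<eta>) * u 0 + \<eta> * u T \<le> T * u \<eta>"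
    using concave_three_point_if_deriv_antimono[OF assms(2,3) _ u'_anti] assms(8) by simp
  moreover have "\<alpha> * \<eta> * u \<eta> \<le> u T"
  proof -
    have sub: "{0..\<eta>} \<subseteq> {0..T}"
      using assms(3) by auto
    have "\<eta> * u \<eta> \<le> integral {0..\<eta>} u"
      using integral_ge_of_antimono_on[of 0 \<eta> u] assms(2)
        continuous_on_subset[OF cont_u sub] monotone_on_subset[OF u_anti sub] by simp
    then show ?thesis
      using assms(4,12) by (simp add: mult_left_mono mult.assoc)
  qed
  moreover have "\<alpha> * \<eta> < 1" "u T \<le> u 0"
    using assms(1,2,5) monotone_onD[OF u_anti, of 0 T] by (auto simp: field_simps)
  ultimately have "\<alpha> * \<eta> * (T - \<eta>) / (T - \<alpha> * \<eta>^2) * u 0 \<le> u T" and "0 \<le> u T"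
    using three_point_estimate[OF assms(2,3,4)] by auto
  then show ?thesis
    using cINF_antimono_on_Icc[OF _ u_anti] cSUP_abs_antimono_on_Icc[OF _ u_anti \<open>0 \<le> u T\<close>]
      assms(1)
    by simp
qed

end
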